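(* Let $n\ge1$ and $1\le m\le\lfloor n/2\rfloor$. For every $l\in\{0,1,\dots,m-1\}$, $$\bigl|\{\pi\in\mathfrak{S}_n:{\rm altmaj}(\pi)\equiv l \pmod{2m}\}\bigr|=\bigl|\{\pi\in\mathfrak{S}_n:{\rm altmaj}(\pi)\equiv l+m \pmod{2m}\}\bigr|.$$ Consequently, $1+q^m$ divides $\sum_{\pi\in\mathfrak{S}_n}q^{{\rm altmaj}(\pi)}$ for $1\le m\le \lfloor n/2\rfloor$.
   Context: $\mathfrak{S}_n$ is the set of permutations $\pi=\pi_1\cdots\pi_n$ of $\{1,\dots,n\}$; $\widehat{D}(\pi)=\{2i:\pi_{2i}<\pi_{2i+1}\}\cup\{2i+1:\pi_{2i+1}>\pi_{2i+2}\}$ (indices in $\{1,\dots,n-1\}$) and ${\rm altmaj}(\pi)=\sum_{i\in\widehat{D}(\pi)}i$. *)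

theory Defs
  imports "HOL-Combinatorics.Permutations" "HOL-Computational_Algebra.Polynomial"
begin

text \<open>A permutation pi of {1..n} is a function p with p permutes {1..n}; pi_i = p i.\<close>

definition altdes :: "nat \<Rightarrow> (nat \<Rightarrow> nat) \<Rightarrow> nat set" where
  "altdes n p = {i \<in> {1..<n}. (even i \<and> p i < p (i+1)) \<or> (odd i \<and> p i > p (i+1))}"

definition altmaj :: "nat \<Rightarrow> (nat \<Rightarrow> nat) \<Rightarrow> nat" where
  "altmaj n p = (\<Sum>i\<in>altdes n p. i)"

end

theory Submission
  imports Defs
begin

(* Reversing the first 2m letters, p |-> p o reverse_prefix (2m), is an involution on the
  permutations of {1..n}. For 1 <= i < 2m it turns the adjacent pair at position i into the
  reversed pair at position 2m - i, which has the same parity; so i is an alternating descent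
  of the image iff 2m - i is not one of p. Positions after 2m are unaffected and position 2m
  contributes 0 modulo 2m. As 1 + ... + (2m - 1) = m (2m - 1) is congruent to m, altmaj is
  shifted by m modulo 2m, and the involution swaps the residue classes l and l + m.
  Since q^(2m) = 1 modulo 1 + q^m, the generating function is then congruent to
  (1 + q^m) times the sum of c_l q^l over l < m, c_l being the size of the class l. *)

definition reverse_prefix :: "nat \<Rightarrow> nat \<Rightarrow> nat" where
  "reverse_prefix k i = (if 1 \<le> i \<and> i \<le> k then k + 1 - i else i)"

lemma reverse_prefix_reverse_prefix [simp]: "reverse_prefix k (reverse_prefix k i) = i"
  by (auto simp: reverse_prefix_def)

lemma reverse_prefix_permutes:
  assumes "k \<le> n"
  shows "reverse_prefix k permutes {1..n}"
proof (rule bij_imp_permutes)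
  show "bij_betw (reverse_prefix k) {1..n} {1..n}"
    by (rule bij_betw_byWitness[where f' = "reverse_prefix k"])
       (use assms in \<open>auto simp: reverse_prefix_def\<close>)
qed (use assms in \<open>auto simp: reverse_prefix_def\<close>)

lemma sum_atLeastLessThan_double_plus: "\<Sum>{1..<2*m} + m = 2*m*(m::nat)"
  by (induction m) (simp_all add: atLeastLessThanSuc algebra_simps)

lemma sum_reflected_complement_mod:
  fixes A :: "nat set"
  assumes "A \<subseteq> {1..<2*m}"
  shows "\<Sum>{i \<in> {1..<2*m}. 2*m - i \<notin> A} mod (2*m) = (\<Sum>A + m) mod (2*m)"
proof -
  define C where "C = {1..<2*m} - A"
  have reflect: "\<Sum>{i \<in> {1..<2*m}. 2*m - i \<notin> A} = (\<Sum>j\<in>C. 2*m - j)"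
    unfolding C_def
    by (rule sum.reindex_bij_witness[where i = "\<lambda>j. 2*m - j" and j = "\<lambda>i. 2*m - i"]) auto
  have "(\<Sum>j\<in>C. 2*m - j) + \<Sum>C = 2*m * card C"
    by (simp add: C_def sum.distrib[symmetric])
  moreover have "\<Sum>C + \<Sum>A = \<Sum>{1..<2*m}"
    unfolding C_def using assms by (simp add: sum.subset_diff[symmetric])
  ultimately have "(\<Sum>j\<in>C. 2*m - j) + 2*m*m = \<Sum>A + m + 2*m * card C"
    using sum_atLeastLessThan_double_plus[of m] by linarith
  then have "((\<Sum>j\<in>C. 2*m - j) + 2*m*m) mod (2*m) = (\<Sum>A + m + 2*m * card C) mod (2*m)"
    by (rule arg_cong)
  then show ?thesis
    unfolding reflect by simp
qed

lemma altdes_subset: "altdes n p \<subseteq> {1..<n}"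
  by (auto simp: altdes_def)

lemma sum_remove_modulus_mod:
  fixes D :: "nat set"
  assumes "finite D"
  shows "\<Sum>D mod k = \<Sum>(D - {k}) mod k"
  using assms by (cases "k \<in> D") (simp_all add: sum.remove)

lemma altmaj_mod_eq_sum_off_modulus:
  "altmaj n p mod k = (\<Sum>(altdes n p \<inter> {..<k}) + \<Sum>(altdes n p \<inter> {k<..})) mod k"
proof -
  have fin: "finite (altdes n p)"
    by (rule finite_subset[OF altdes_subset]) simp
  have "altdes n p - {k} = (altdes n p \<inter> {..<k}) \<union> (altdes n p \<inter> {k<..})"
    by auto
  then have "\<Sum>(altdes n p - {k}) = \<Sum>(altdes n p \<inter> {..<k}) + \<Sum>(altdes n p \<inter> {k<..})"
    using fin by (simp add: sum.union_disjoint disjoint_iff)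
  then show ?thesis
    unfolding altmaj_def using sum_remove_modulus_mod[OF fin] by simp
qed

lemma altdes_comp_reverse_prefix_head:
  assumes "inj p" and "2*m \<le> n" and i: "i \<in> {1..<2*m}"
  shows "i \<in> altdes n (p \<circ> reverse_prefix (2*m)) \<longleftrightarrow> 2*m - i \<notin> altdes n p"
proof -
  define j where "j = 2*m - i"
  have r: "reverse_prefix (2*m) i = j + 1" "reverse_prefix (2*m) (Suc i) = j"
    using i by (simp_all add: reverse_prefix_def j_def Suc_diff_le)
  have parity: "even i \<longleftrightarrow> even j"
    using i by (auto simp: j_def even_diff_nat)
  have "i \<in> {1..<n}" "j \<in> {1..<n}"
    using i assms(2) by (auto simp: j_def)
  then have "i \<in> altdes n (p \<circ> reverse_prefix (2*m))
               \<longleftrightarrow> (even j \<and> p (j + 1) < p j) \<or> (odd j \<and> p (j + 1) > p j)"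
       and "j \<in> altdes n p \<longleftrightarrow> (even j \<and> p j < p (j + 1)) \<or> (odd j \<and> p j > p (j + 1))"
    by (simp_all add: altdes_def r parity)
  moreover have "p j \<noteq> p (j + 1)"
    using \<open>inj p\<close> by (metis inj_eq n_not_Suc_n Suc_eq_plus1)
  ultimately show ?thesis
    unfolding j_def by auto
qed

lemma altdes_comp_reverse_prefix_tail:
  "altdes n (p \<circ> reverse_prefix k) \<inter> {k<..} = altdes n p \<inter> {k<..}"
  by (auto simp: altdes_def reverse_prefix_def)

lemma altmaj_comp_reverse_prefix_mod:
  assumes "inj p" and "2*m \<le> n"
  shows "altmaj n (p \<circ> reverse_prefix (2*m)) mod (2*m) = (altmaj n p + m) mod (2*m)"
proof -
  let ?D = "altdes n p" and ?D' = "altdes n (p \<circ> reverse_prefix (2*m))"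
  have head_set: "?D' \<inter> {..<2*m} = {i \<in> {1..<2*m}. 2*m - i \<notin> ?D \<inter> {..<2*m}}"
  proof (rule set_eqI)
    fix i
    show "i \<in> ?D' \<inter> {..<2*m} \<longleftrightarrow> i \<in> {i \<in> {1..<2*m}. 2*m - i \<notin> ?D \<inter> {..<2*m}}"
    proof (cases "i \<in> {1..<2*m}")
      case True
      then show ?thesis
        using altdes_comp_reverse_prefix_head[OF assms True] by auto
    next
      case False
      then show ?thesis
        using altdes_subset[of n "p \<circ> reverse_prefix (2*m)"] by auto
    qed
  qed
  have head: "\<Sum>(?D' \<inter> {..<2*m}) mod (2*m) = (\<Sum>(?D \<inter> {..<2*m}) + m) mod (2*m)"
    unfolding head_set
    by (rule sum_reflected_complement_mod) (use altdes_subset[of n p] in auto)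
  have "altmaj n (p \<circ> reverse_prefix (2*m)) mod (2*m)
          = (\<Sum>(?D' \<inter> {..<2*m}) + \<Sum>(?D \<inter> {2*m<..})) mod (2*m)"
    by (simp only: altmaj_mod_eq_sum_off_modulus altdes_comp_reverse_prefix_tail)
  also have "\<dots> = (\<Sum>(?D \<inter> {..<2*m}) + m + \<Sum>(?D \<inter> {2*m<..})) mod (2*m)"
    by (rule mod_add_cong[OF head refl])
  also have "\<dots> = (\<Sum>(?D \<inter> {..<2*m}) + \<Sum>(?D \<inter> {2*m<..}) + m) mod (2*m)"
    by (simp only: ac_simps)
  also have "\<dots> = (altmaj n p + m) mod (2*m)"
    by (rule mod_add_cong[OF altmaj_mod_eq_sum_off_modulus[symmetric] refl])
  finally show ?thesis .
qed

lemma card_residue_eq_card_shifted_residue: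
  fixes f :: "'a \<Rightarrow> nat"
  assumes closed: "\<And>x. x \<in> S \<Longrightarrow> \<phi> x \<in> S"
    and involution: "\<And>x. x \<in> S \<Longrightarrow> \<phi> (\<phi> x) = x"
    and shift: "\<And>x. x \<in> S \<Longrightarrow> f (\<phi> x) mod (2*m) = (f x + m) mod (2*m)"
    and "l < m"
  shows "card {x \<in> S. f x mod (2*m) = l} = card {x \<in> S. f x mod (2*m) = l + m}"
proof (rule bij_betw_same_card, rule bij_betw_byWitness[where f' = \<phi>])
  have shifted: "f (\<phi> x) mod (2*m) = (r + m) mod (2*m)" if "x \<in> S" "f x mod (2*m) = r" for x r
    using shift[OF that(1)] that(2) by (metis mod_add_left_eq)
  have "(l + m) mod (2*m) = l + m" "(l + m + m) mod (2*m) = l"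
    using \<open>l < m\<close> by (simp_all add: mult_2 add.assoc)
  then show "\<phi> ` {x \<in> S. f x mod (2*m) = l} \<subseteq> {x \<in> S. f x mod (2*m) = l + m}"
      and "\<phi> ` {x \<in> S. f x mod (2*m) = l + m} \<subseteq> {x \<in> S. f x mod (2*m) = l}"
    using closed shifted by auto
qed (use involution in auto)

lemma one_plus_power_dvd_power_diff_mod:
  fixes y :: "'a::comm_ring_1"
  shows "(1 + y^m) dvd y^k - y^(k mod (2*m))"
proof -
  have "y^(2*m) - 1 = (1 + y^m) * (y^m - 1)"
    by (simp add: power_mult power2_eq_square algebra_simps)
  then have "(1 + y^m) dvd y^(2*m) - 1"
    by simp
  also have "y^(2*m) - 1 dvd (y^(2*m))^(k div (2*m)) - 1"
    by (simp add: power_diff_1_eq)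
  also have "\<dots> dvd y^(k mod (2*m)) * ((y^(2*m))^(k div (2*m)) - 1)"
    by simp
  also have "\<dots> = y^k - y^(k mod (2*m))"
  proof -
    have "y^k = y^(k mod (2*m) + 2*m*(k div (2*m)))"
      by (simp only: mod_mult_div_eq)
    then show ?thesis
      by (simp only: power_add power_mult right_diff_distrib mult_1_right)
  qed
  finally show ?thesis .
qed

lemma one_plus_power_dvd_sum_power:
  fixes f :: "'a \<Rightarrow> nat" and y :: "'b::comm_ring_1"
  assumes "finite S" and "0 < m"
    and balanced: "\<And>l. l < m \<Longrightarrow>
      card {x \<in> S. f x mod (2*m) = l} = card {x \<in> S. f x mod (2*m) = l + m}"
  shows "(1 + y^m) dvd (\<Sum>x\<in>S. y^(f x))"
proof -
  define c where "c l = of_nat (card {x \<in> S. f x mod (2*m) = l}) * y^l" for l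
  have "(\<Sum>x\<in>S. y^(f x mod (2*m))) = (\<Sum>l<2*m. c l)"
  proof -
    have "(\<Sum>l<2*m. c l) = (\<Sum>l<2*m. \<Sum>x\<in>{x \<in> S. f x mod (2*m) = l}. y^(f x mod (2*m)))"
      by (simp add: c_def)
    also have "\<dots> = (\<Sum>x\<in>S. y^(f x mod (2*m)))"
      by (rule sum.group) (use \<open>finite S\<close> \<open>0 < m\<close> in auto)
    finally show ?thesis by simp
  qed
  also have "\<dots> = (\<Sum>l<m. c l) + (\<Sum>l<m. c (l + m))"
    by (simp add: mult_2 lessThan_atLeast0 sum.atLeastLessThan_concat[of 0 m "m + m", symmetric]
        sum.shift_bounds_nat_ivl[of _ 0 m m, simplified])
  also have "\<dots> = (\<Sum>l<m. c l) + (\<Sum>l<m. c l * y^m)"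
    using balanced by (simp add: c_def power_add mult.assoc)
  also have "\<dots> = (\<Sum>l<m. c l) * (1 + y^m)"
    by (simp add: distrib_left sum_distrib_right)
  finally have "(1 + y^m) dvd (\<Sum>x\<in>S. y^(f x mod (2*m)))"
    by simp
  moreover have "(1 + y^m) dvd (\<Sum>x\<in>S. y^(f x) - y^(f x mod (2*m)))"
    by (rule dvd_sum) (rule one_plus_power_dvd_power_diff_mod)
  moreover have "(\<Sum>x\<in>S. y^(f x))
      = (\<Sum>x\<in>S. y^(f x) - y^(f x mod (2*m))) + (\<Sum>x\<in>S. y^(f x mod (2*m)))"
    by (simp add: sum_subtractf)
  ultimately show ?thesis
    by (simp add: dvd_add)
qed

theorem theorem4p9:
  fixes n m :: nat
  assumes "n \<ge> 1" and "1 \<le> m" and "m \<le> n div 2"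
  shows "(\<forall>l<m. card {p. p permutes {1..n} \<and> altmaj n p mod (2*m) = l}
                 = card {p. p permutes {1..n} \<and> altmaj n p mod (2*m) = l + m})
         \<and> ([:1:] + monom (1::int) m) dvd (\<Sum>p\<in>{p. p permutes {1..n}}. monom 1 (altmaj n p))"
proof -
  let ?P = "{p. p permutes {1..n}}"
  define \<phi> where "\<phi> p = p \<circ> reverse_prefix (2*m)" for p :: "nat \<Rightarrow> nat"
  have "2*m \<le> n"
    using assms(3) by simp
  have closed: "\<phi> p \<in> ?P" if "p \<in> ?P" for p
    using permutes_compose[OF reverse_prefix_permutes[OF \<open>2*m \<le> n\<close>]] that by (simp add: \<phi>_def)
  have shift: "altmaj n (\<phi> p) mod (2*m) = (altmaj n p + m) mod (2*m)" if "p \<in> ?P" for p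
    using altmaj_comp_reverse_prefix_mod[OF permutes_inj \<open>2*m \<le> n\<close>] that by (simp add: \<phi>_def)
  have involution: "\<phi> (\<phi> p) = p" for p
    by (simp add: \<phi>_def fun_eq_iff)
  have balanced: "card {p \<in> ?P. altmaj n p mod (2*m) = l} = card {p \<in> ?P. altmaj n p mod (2*m) = l + m}"
    if "l < m" for l
    by (rule card_residue_eq_card_shifted_residue[where \<phi> = \<phi>]) (use closed involution shift that in auto)
  have "(1 + [:0, 1:]^m) dvd (\<Sum>p\<in>?P. [:0, 1:]^(altmaj n p) :: int poly)"
    by (rule one_plus_power_dvd_sum_power) (use balanced assms(2) finite_permutations in auto)
  then show ?thesis
    using balanced by (simp add: one_pCons monom_altdef)
qed

end
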